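(* Let $X$ be a separable metric space with Borel $\sigma$-algebra $\mathcal B(X)$ and universal $\sigma$-algebra $\mathscr U(X)$, and let $\mathbb P$ be the completion of a (probability) measure on $\mathcal B(X)$ restricted to $\mathscr U(X)$. Let $A\mapsto A^\epsilon$ be a set operation on subsets of $X$ such that $A^\epsilon\in\mathscr U(X)$ whenever $A\in\mathscr U(X)$, and such that for every sequence of sets $\{A_n\}$, $$\bigcup_{n\in\mathbb N}A_n^\epsilon=\Big(\bigcup_{n\in\mathbb N}A_n\Big)^\epsilon,\qquad \bigcap_{n\in\mathbb N}A_n^\epsilon\supseteq\Big(\bigcap_{n\in\mathbb N}A_n\Big)^\epsilon.$$ Define $R^\epsilon(A)=\int(1-\eta(x))\mathbb 1_{A^\epsilon}(x)+\eta(x)\mathbb 1_{(A^C)^\epsilon}(x)\,d\mathbb P$ for $A\in\mathscr U(X)$. Assume that, given any decreasing minimizing sequence $\{B_n\}\subseteq\mathscr U(X)$ of $R^\epsilon$, one can find a decreasing minimizing sequence $\{C_n\}\subseteq\mathscr U(X)$ for which $\bigcap_{n=1}^\infty C_n^\epsilon\subseteq\big(\bigcap_{n=1}^\infty C_n\big)^\epsilon$ up to a $\mathbb P$-null set. Then there exists a minimizer of $R^\epsilon$ in $\mathscr U(X)$.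
   Context: $\mathcal D$ is a probability distribution on $X\times\{-1,+1\}$, $\eta(x)=\mathcal D(Y=+1\mid x)\in[0,1]$ is measurable, and $\mathbb P$ is the marginal on $X$. $\mathscr U(X)$ is the intersection over all $\sigma$-finite Borel measures $\nu$ on $X$ of the completion $\sigma$-algebras $\mathcal L_\nu(X)$. A sequence $\{A_n\}\subseteq\mathscr U(X)$ is minimizing if $R^\epsilon(A_n)\to\inf_{S\in\mathscr U(X)}R^\epsilon(S)$; it is decreasing if $A_{n+1}\subseteq A_n$. *)

theory Defs
  imports "HOL-Probability.Probability"
begin

definition universal_sets :: "'a::topological_space set set" where
  "universal_sets = \<Inter> {sets (completion \<nu>) | \<nu>. sets \<nu> = sets (borel :: 'a measure) \<and> sigma_finite_measure \<nu>}"

definition adv_risk ::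
  "'a measure \<Rightarrow> ('a \<Rightarrow> real) \<Rightarrow> ('a set \<Rightarrow> 'a set) \<Rightarrow> 'a set \<Rightarrow> real" where
  "adv_risk \<mu> \<eta> eps A =
     (\<integral>x. (1 - \<eta> x) * indicator (eps A) x + \<eta> x * indicator (eps (- A)) x \<partial>completion \<mu>)"

definition minimizing_seq ::
  "'a::topological_space measure \<Rightarrow> ('a \<Rightarrow> real) \<Rightarrow> ('a set \<Rightarrow> 'a set) \<Rightarrow> (nat \<Rightarrow> 'a set) \<Rightarrow> bool" where
  "minimizing_seq \<mu> \<eta> eps A \<longleftrightarrow>
     (\<forall>n. A n \<in> universal_sets) \<and>
     (\<lambda>n. adv_risk \<mu> \<eta> eps (A n)) \<longlonglongrightarrow> (INF S\<in>universal_sets. adv_risk \<mu> \<eta> eps S)"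

end

theory Submission
  imports Defs
begin

text \<open>
  Since \<open>eps\<close> commutes with countable unions it is monotone, and pointwise inspection of the
  integrand shows that the adversarial risk \<open>R\<close> is submodular on universally measurable sets:
  \<open>R (A \<union> B) + R (A \<inter> B) \<le> R A + R B\<close>. Moreover \<open>R\<close> cannot jump up along an
  increasing union, because the \<open>eps\<close>-images of the sets increase continuously and those of
  their complements only shrink. Hence, for near-minimisers \<open>A k\<close> of excess \<open>2^-k\<close>,
  submodularity bounds the excess of the tails \<open>\<Union>k\<ge>n. A k\<close> by \<open>2^(1-n)\<close>, and the tails form a
  decreasing minimising sequence. The hypothesis turns it into a decreasing minimising sequence
  \<open>C n\<close> along which the integrand converges a.e. to that of \<open>\<Inter>n. C n\<close>, so by dominated
  convergence \<open>R (\<Inter>n. C n)\<close> equals the infimum of \<open>R\<close>.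
\<close>

lemma space_completion_borel:
  "sets \<nu> = sets (borel :: 'a::topological_space measure) \<Longrightarrow> space (completion \<nu>) = UNIV"
  by (metis sets_eq_imp_space_eq space_borel space_completion)

lemma universal_setsI:
  "(\<And>\<nu>. sets \<nu> = sets borel \<Longrightarrow> sigma_finite_measure \<nu> \<Longrightarrow> A \<in> sets (completion \<nu>))
    \<Longrightarrow> A \<in> universal_sets"
  unfolding universal_sets_def by blast

lemma universal_setsD:
  "A \<in> universal_sets \<Longrightarrow> sets \<nu> = sets borel \<Longrightarrow> sigma_finite_measure \<nu>
    \<Longrightarrow> A \<in> sets (completion \<nu>)"
  unfolding universal_sets_def by blast

interpretation universal_sets: sigma_algebra "UNIV :: 'a::topological_space set" universal_sets
  unfolding sigma_algebra_iff2
proof (intro conjI ballI allI impI)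
  show "universal_sets \<subseteq> Pow (UNIV :: 'a set)"
    by simp
  show "{} \<in> (universal_sets :: 'a set set)"
    by (intro universal_setsI sets.empty_sets)
  show "UNIV - A \<in> universal_sets" if "A \<in> (universal_sets :: 'a set set)" for A
  proof (rule universal_setsI)
    fix \<nu> :: "'a measure"
    assume "sets \<nu> = sets borel" "sigma_finite_measure \<nu>"
    then show "UNIV - A \<in> sets (completion \<nu>)"
      using sets.compl_sets[OF universal_setsD[OF that]] space_completion_borel by metis
  qed
  show "(\<Union>i. A i) \<in> universal_sets" if "range A \<subseteq> universal_sets" for A :: "nat \<Rightarrow> 'a set"
  proof (rule universal_setsI)
    fix \<nu> :: "'a measure"
    assume "sets \<nu> = sets borel" "sigma_finite_measure \<nu>"
    then show "(\<Union>i. A i) \<in> sets (completion \<nu>)"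
      using that by (auto intro!: sets.countable_UN'' universal_setsD)
  qed
qed

lemma Compl_in_universal_sets: "A \<in> universal_sets \<Longrightarrow> - A \<in> universal_sets"
  using universal_sets.compl_sets by (simp add: Compl_eq_Diff_UNIV)

locale adversarial_risk =
  fixes \<mu> :: "'a::topological_space measure" and \<eta> :: "'a \<Rightarrow> real" and eps :: "'a set \<Rightarrow> 'a set"
  assumes finite_measure: "finite_measure \<mu>"
    and sets_borel: "sets \<mu> = sets borel"
    and eta_measurable: "\<eta> \<in> borel_measurable borel"
    and eta_bounds: "\<And>x. 0 \<le> \<eta> x \<and> \<eta> x \<le> 1"
    and eps_universal: "\<And>A. A \<in> universal_sets \<Longrightarrow> eps A \<in> universal_sets"
    and eps_countable_UN: "\<And>A :: nat \<Rightarrow> 'a set. (\<Union>n. eps (A n)) = eps (\<Union>n. A n)"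
begin

abbreviation "M \<equiv> completion \<mu>"
abbreviation "R \<equiv> adv_risk \<mu> \<eta> eps"

definition loss :: "'a set \<Rightarrow> 'a \<Rightarrow> real" where
  "loss A x = (1 - \<eta> x) * indicator (eps A) x + \<eta> x * indicator (eps (- A)) x"

definition inf_risk :: real where
  "inf_risk = (INF S\<in>universal_sets. R S)"

lemma adv_risk_eq_integral_loss: "R A = integral\<^sup>L M (loss A)"
  unfolding adv_risk_def loss_def ..

lemma eps_Un: "eps (A \<union> B) = eps A \<union> eps B"
proof -
  have "(\<lambda>i. eps (binary A B i)) = binary (eps A) (eps B)"
    by (auto simp: binary_def fun_eq_iff)
  then show ?thesis
    using eps_countable_UN[of "binary A B"] by (metis Un_range_binary)
qed

lemma eps_mono: "A \<subseteq> B \<Longrightarrow> eps A \<subseteq> eps B"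
  using eps_Un[of A B] by (metis Un_upper1 sup.absorb2)

sublocale M: finite_measure M
  using finite_measure by (intro finite_measureI) (simp add: finite_measure.emeasure_finite)

lemma space_mu[simp]: "space \<mu> = UNIV"
  by (metis sets_borel sets_eq_imp_space_eq space_borel)

lemma universal_sets_in_M: "A \<in> universal_sets \<Longrightarrow> A \<in> sets M"
  using finite_measure sets_borel by (auto intro: universal_setsD finite_measure.axioms)

lemma eps_in_M: "A \<in> universal_sets \<Longrightarrow> eps A \<in> sets M"
  by (intro universal_sets_in_M eps_universal)

lemma loss_measurable: "A \<in> universal_sets \<Longrightarrow> loss A \<in> borel_measurable M"
proof -
  assume A: "A \<in> universal_sets"
  have "\<eta> \<in> borel_measurable M"
    by (intro measurable_completion) (simp add: measurable_cong_sets[OF sets_borel refl] eta_measurable)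
  then show ?thesis
    unfolding loss_def using eps_in_M[OF A] eps_in_M[OF Compl_in_universal_sets[OF A]]
    by (intro borel_measurable_add borel_measurable_times borel_measurable_diff
        borel_measurable_indicator) auto
qed

lemma loss_bounds: "0 \<le> loss A x \<and> loss A x \<le> 1"
  using eta_bounds[of x] by (auto simp: loss_def indicator_def)

lemma integrable_loss: "A \<in> universal_sets \<Longrightarrow> integrable M (loss A)"
  by (rule M.integrable_const_bound[where B=1]) (use loss_bounds loss_measurable in auto)

lemma integrable_indicator_M: "A \<in> sets M \<Longrightarrow> integrable M (indicator A :: 'a \<Rightarrow> real)"
  by (rule M.integrable_const_bound[where B=1]) auto

lemma adv_risk_nonneg: "0 \<le> R A"
  unfolding adv_risk_eq_integral_loss by (rule integral_nonneg_AE) (use loss_bounds in auto)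

lemma bdd_below_adv_risk: "bdd_below (R ` universal_sets)"
  using adv_risk_nonneg by (intro bdd_belowI[where m=0]) auto

lemma inf_risk_le: "S \<in> universal_sets \<Longrightarrow> inf_risk \<le> R S"
  unfolding inf_risk_def by (rule cINF_lower[OF bdd_below_adv_risk])

lemma exists_near_minimizer: "e > 0 \<Longrightarrow> \<exists>A\<in>universal_sets. R A < inf_risk + e"
  using cINF_less_iff[OF _ bdd_below_adv_risk, of "inf_risk + e"] universal_sets.empty_sets
  unfolding inf_risk_def by auto

lemma loss_Un_Int_le: "loss (A \<union> B) x + loss (A \<inter> B) x \<le> loss A x + loss B x"
proof -
  have "eps (A \<inter> B) \<subseteq> eps A \<inter> eps B" "eps (- (A \<union> B)) \<subseteq> eps (- A) \<inter> eps (- B)"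
    using eps_mono by auto
  moreover have "eps (- (A \<inter> B)) = eps (- A) \<union> eps (- B)"
    using eps_Un[of "- A" "- B"] by simp
  ultimately show ?thesis
    using eta_bounds[of x] eps_Un[of A B] by (auto simp: loss_def indicator_def)
qed

lemma adv_risk_Un_Int_le:
  assumes "A \<in> universal_sets" "B \<in> universal_sets"
  shows "R (A \<union> B) + R (A \<inter> B) \<le> R A + R B"
proof -
  have "A \<union> B \<in> universal_sets" "A \<inter> B \<in> universal_sets"
    using assms by auto
  then have "R (A \<union> B) + R (A \<inter> B) = integral\<^sup>L M (\<lambda>x. loss (A \<union> B) x + loss (A \<inter> B) x)"
    by (simp add: adv_risk_eq_integral_loss integrable_loss)
  also have "\<dots> \<le> integral\<^sup>L M (\<lambda>x. loss A x + loss B x)"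
    using assms \<open>A \<union> B \<in> universal_sets\<close> \<open>A \<inter> B \<in> universal_sets\<close>
    by (intro integral_mono loss_Un_Int_le) (auto intro: integrable_loss)
  also have "\<dots> = R A + R B"
    using assms by (simp add: adv_risk_eq_integral_loss integrable_loss)
  finally show ?thesis .
qed

lemma adv_risk_UN_atMost_le:
  assumes A: "\<And>k. A k \<in> universal_sets" "\<And>k. R (A k) \<le> inf_risk + (1/2)^k"
  shows "R (\<Union>k\<le>j. A (n + k)) \<le> inf_risk + 2 * (1/2)^n - (1/2)^(n + j)"
proof (induction j)
  case 0
  then show ?case
    using A(2)[of n] by simp
next
  case (Suc j)
  let ?D = "\<Union>k\<le>j. A (n + k)" and ?A = "A (n + Suc j)"
  have D: "?D \<in> universal_sets"
    using A(1) by auto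
  have "R (?D \<union> ?A) + inf_risk \<le> R (?D \<union> ?A) + R (?D \<inter> ?A)"
    using D A(1) by (auto intro: inf_risk_le)
  also have "\<dots> \<le> R ?D + R ?A"
    using D A(1) by (rule adv_risk_Un_Int_le)
  finally show ?case
    using Suc A(2)[of "n + Suc j"] by (simp add: atMost_Suc Un_commute)
qed

lemma adv_risk_incseq_UN_le:
  assumes inc: "incseq D" and D: "\<And>j. D j \<in> universal_sets" and le: "\<And>j. R (D j) \<le> c"
  shows "R (\<Union>j. D j) \<le> c"
proof -
  let ?D = "\<Union>j. D j"
  have D_UN: "?D \<in> universal_sets"
    using D by auto
  have "(\<lambda>j. measure M (eps (D j))) \<longlonglongrightarrow> measure M (\<Union>j. eps (D j))"
    using inc D by (intro M.finite_Lim_measure_incseq) (auto simp: incseq_def eps_mono eps_in_M)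
  then have lim: "(\<lambda>j. c + (measure M (eps ?D) - measure M (eps (D j)))) \<longlonglongrightarrow> c"
    unfolding eps_countable_UN by (auto intro!: tendsto_eq_intros)
  have "R ?D \<le> c + (measure M (eps ?D) - measure M (eps (D j)))" for j
  proof -
    have D_sub: "D j \<subseteq> ?D"
      by auto
    have diff: "eps ?D - eps (D j) \<in> sets M"
      using eps_in_M D D_UN by auto
    \<comment> \<open>Passing from \<open>D j\<close> to \<open>?D\<close> can only add the points of \<open>eps ?D - eps (D j)\<close>.\<close>
    have "loss ?D x \<le> loss (D j) x + indicator (eps ?D - eps (D j)) x" for x
      using eps_mono[of "- ?D" "- D j"] D_sub eta_bounds[of x] by (auto simp: loss_def indicator_def)
    then have "R ?D \<le> integral\<^sup>L M (\<lambda>x. loss (D j) x + indicator (eps ?D - eps (D j)) x)"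
      unfolding adv_risk_eq_integral_loss using D D_UN diff
      by (intro integral_mono) (auto intro: integrable_loss integrable_indicator_M)
    also have "\<dots> = R (D j) + measure M (eps ?D - eps (D j))"
      using D diff by (simp add: adv_risk_eq_integral_loss integrable_loss integrable_indicator_M)
    also have "measure M (eps ?D - eps (D j)) = measure M (eps ?D) - measure M (eps (D j))"
      using D D_UN D_sub by (intro M.finite_measure_Diff eps_in_M eps_mono)
    finally show ?thesis
      using le[of j] by linarith
  qed
  then show ?thesis
    using lim by (intro LIMSEQ_le_const) auto
qed

lemma adv_risk_tail_le:
  assumes A: "\<And>k. A k \<in> universal_sets" "\<And>k. R (A k) \<le> inf_risk + (1/2)^k"
  shows "R (\<Union>k. A (n + k)) \<le> inf_risk + 2 * (1/2)^n"
proof -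
  have "(\<Union>k. A (n + k)) = (\<Union>j. \<Union>k\<le>j. A (n + k))"
    by auto
  moreover have "incseq (\<lambda>j. \<Union>k\<le>j. A (n + k))"
    by (rule incseq_SucI) (auto simp: atMost_Suc)
  moreover have "R (\<Union>k\<le>j. A (n + k)) \<le> inf_risk + 2 * (1/2)^n" for j
    using adv_risk_UN_atMost_le[OF A, of n j] zero_le_power[of "1/2::real" "n + j"]
    by linarith
  ultimately show ?thesis
    using A(1) by (auto intro!: adv_risk_incseq_UN_le)
qed

lemma exists_decseq_minimizing: "\<exists>B. decseq B \<and> minimizing_seq \<mu> \<eta> eps B"
proof -
  have "\<forall>k. \<exists>A\<in>universal_sets. R A < inf_risk + (1/2)^k"
    by (simp add: exists_near_minimizer)
  then obtain A where A: "\<And>k. A k \<in> universal_sets" "\<And>k. R (A k) < inf_risk + (1/2)^k"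
    by metis
  define B where "B n = (\<Union>k. A (n + k))" for n
  have B: "B n \<in> universal_sets" for n
    using A(1) by (auto simp: B_def)
  have "(\<lambda>n. 2 * (1/2::real)^n) \<longlonglongrightarrow> 0"
    by (intro tendsto_mult_right_zero LIMSEQ_realpow_zero) auto
  then have "(\<lambda>n. inf_risk + 2 * (1/2::real)^n) \<longlonglongrightarrow> inf_risk"
    using tendsto_add[OF tendsto_const] by fastforce
  then have "(\<lambda>n. R (B n)) \<longlonglongrightarrow> inf_risk"
  proof (rule tendsto_sandwich[OF always_eventually always_eventually tendsto_const, rotated 2])
    show "\<forall>n. inf_risk \<le> R (B n)"
      using B by (blast intro: inf_risk_le)
    show "\<forall>n. R (B n) \<le> inf_risk + 2 * (1/2)^n"
      unfolding B_def using A by (blast intro: adv_risk_tail_le less_imp_le)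
  qed
  moreover have "B (Suc n) \<subseteq> B n" for n
  proof
    fix x
    assume "x \<in> B (Suc n)"
    then obtain k where "x \<in> A (n + Suc k)"
      by (auto simp: B_def)
    then show "x \<in> B n"
      unfolding B_def by blast
  qed
  then have "decseq B"
    by (rule decseq_SucI)
  ultimately show ?thesis
    using B unfolding minimizing_seq_def inf_risk_def by auto
qed

lemma loss_decseq_tendsto:
  assumes dec: "decseq C" and x: "x \<in> (\<Inter>n. eps (C n)) \<longrightarrow> x \<in> eps (\<Inter>n. C n)"
  shows "(\<lambda>n. loss (C n) x) \<longlonglongrightarrow> loss (\<Inter>n. C n) x"
proof -
  have "eps (\<Inter>n. C n) \<subseteq> (\<Inter>n. eps (C n))"
    by (auto intro: eps_mono[THEN subsetD, rotated])
  then have "indicator (\<Inter>n. eps (C n)) x = (indicator (eps (\<Inter>n. C n)) x :: real)"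
    using x by (auto simp: indicator_def)
  moreover have "(\<lambda>n. indicator (eps (C n)) x :: real) \<longlonglongrightarrow> indicator (\<Inter>n. eps (C n)) x"
    using dec by (intro LIMSEQ_indicator_decseq) (auto simp: decseq_def eps_mono)
  ultimately have "(\<lambda>n. indicator (eps (C n)) x :: real) \<longlonglongrightarrow> indicator (eps (\<Inter>n. C n)) x"
    by simp
  moreover have "(\<lambda>n. indicator (eps (- C n)) x :: real) \<longlonglongrightarrow> indicator (\<Union>n. eps (- C n)) x"
    using dec by (intro LIMSEQ_indicator_incseq) (auto simp: decseq_def incseq_def eps_mono)
  then have "(\<lambda>n. indicator (eps (- C n)) x :: real) \<longlonglongrightarrow> indicator (eps (- (\<Inter>n. C n))) x"
    by (simp add: eps_countable_UN)
  ultimately show ?thesis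
    unfolding loss_def by (intro tendsto_intros)
qed

lemma adv_risk_decseq_tendsto:
  assumes dec: "decseq C" and C: "\<And>n. C n \<in> universal_sets"
    and ae: "AE x in M. x \<in> (\<Inter>n. eps (C n)) \<longrightarrow> x \<in> eps (\<Inter>n. C n)"
  shows "(\<lambda>n. R (C n)) \<longlonglongrightarrow> R (\<Inter>n. C n)"
  unfolding adv_risk_eq_integral_loss
proof (rule integral_dominated_convergence[where w="\<lambda>_. 1"])
  show "AE x in M. (\<lambda>n. loss (C n) x) \<longlonglongrightarrow> loss (\<Inter>n. C n) x"
    using ae by eventually_elim (rule loss_decseq_tendsto[OF dec])
qed (use C loss_bounds in \<open>auto intro: loss_measurable\<close>)

end

theorem theorem10:
  fixes \<mu> :: "'a::{metric_space, second_countable_topology} measure"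
    and \<eta> :: "'a \<Rightarrow> real"
    and eps :: "'a set \<Rightarrow> 'a set"
  assumes "prob_space \<mu>"
    and "sets \<mu> = sets borel"
    and "\<eta> \<in> borel_measurable borel"
    and "\<And>x. 0 \<le> \<eta> x \<and> \<eta> x \<le> 1"
    and "\<And>A. A \<in> universal_sets \<Longrightarrow> eps A \<in> universal_sets"
    and "\<And>A :: nat \<Rightarrow> 'a set. (\<Union>n. eps (A n)) = eps (\<Union>n. A n)"
    and "\<And>A :: nat \<Rightarrow> 'a set. eps (\<Inter>n. A n) \<subseteq> (\<Inter>n. eps (A n))"
    and "\<And>B. decseq B \<Longrightarrow> minimizing_seq \<mu> \<eta> eps B \<Longrightarrow>
           \<exists>C. decseq C \<and> minimizing_seq \<mu> \<eta> eps C \<and>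
               (AE x in completion \<mu>. x \<in> (\<Inter>n. eps (C n)) \<longrightarrow> x \<in> eps (\<Inter>n. C n))"
  shows "\<exists>A\<in>universal_sets. \<forall>S\<in>universal_sets. adv_risk \<mu> \<eta> eps A \<le> adv_risk \<mu> \<eta> eps S"
proof -
  interpret adversarial_risk \<mu> \<eta> eps
  proof (rule adversarial_risk.intro)
    show "finite_measure \<mu>"
      using assms(1) by (simp add: prob_space_def)
  qed (fact assms)+
  obtain B where "decseq B" "minimizing_seq \<mu> \<eta> eps B"
    using exists_decseq_minimizing by blast
  then obtain C where dec: "decseq C" and min: "minimizing_seq \<mu> \<eta> eps C"
    and ae: "AE x in M. x \<in> (\<Inter>n. eps (C n)) \<longrightarrow> x \<in> eps (\<Inter>n. C n)"
    using assms(8) by blast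
  have C: "C n \<in> universal_sets" for n
    using min by (simp add: minimizing_seq_def)
  have "(\<lambda>n. R (C n)) \<longlonglongrightarrow> inf_risk"
    using min by (simp add: minimizing_seq_def inf_risk_def)
  with adv_risk_decseq_tendsto[OF dec C ae] have "R (\<Inter>n. C n) = inf_risk"
    by (rule LIMSEQ_unique)
  moreover have "(\<Inter>n. C n) \<in> universal_sets"
    using C by (intro universal_sets.countable_INT) auto
  ultimately show ?thesis
    using inf_risk_le by metis
qed

end
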